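(* Let $\mathcal{H}$ be a family of simple $r$-uniform hypergraphs and let $G$ be an $r$-uniform multihypergraph in which every edge has the same multiplicity. Then there exists a simple $r$-uniform hypergraph $G'$ with $e(G')=e(G)$ and $\operatorname{ex}(G',\mathcal{H})\leq\operatorname{ex}(G,\mathcal{H})$.
   Context: $e(\cdot)$ counts edges with multiplicity. For an $r$-uniform (multi)hypergraph $G$, $\operatorname{ex}(G,\mathcal{H})$ is the maximum number of edges (with multiplicity) of a sub-multihypergraph of $G$ (sub-multiset of its edges) that contains no member of $\mathcal{H}$ as a subgraph. *)

theory Defs
  imports Main "HOL-Library.Multiset"
begin

definition uniform_hg :: "nat \<Rightarrow> 'a set \<Rightarrow> 'a set set \<Rightarrow> bool" where
  "uniform_hg r V E \<longleftrightarrow> finite V \<and> (\<forall>e\<in>E. e \<subseteq> V \<and> card e = r)"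

definition uniform_mhg :: "nat \<Rightarrow> 'a set \<Rightarrow> 'a set multiset \<Rightarrow> bool" where
  "uniform_mhg r V M \<longleftrightarrow> finite V \<and> (\<forall>e\<in>#M. e \<subseteq> V \<and> card e = r)"

definition contains_copy :: "'c set \<times> 'c set set \<Rightarrow> 'a set \<Rightarrow> 'a set set \<Rightarrow> bool" where
  "contains_copy h V F \<longleftrightarrow>
     (\<exists>f. inj_on f (fst h) \<and> f ` (fst h) \<subseteq> V \<and> (\<forall>e\<in>snd h. f ` e \<in> F))"

definition H_free :: "('c set \<times> 'c set set) set \<Rightarrow> 'a set \<Rightarrow> 'a set set \<Rightarrow> bool" where
  "H_free H V F \<longleftrightarrow> \<not> (\<exists>h\<in>H. contains_copy h V F)"

text \<open>ex(G,H) for a multihypergraph G = (V,M): maximum size (with multiplicity) of an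
  H-free sub-multiset of the edges.  (Sup of an empty set of nats is 0.)\<close>
definition ex_multi :: "'a set \<Rightarrow> 'a set multiset \<Rightarrow> ('c set \<times> 'c set set) set \<Rightarrow> nat" where
  "ex_multi V M H = Sup {size M' | M'. M' \<subseteq># M \<and> H_free H V (set_mset M')}"

definition ex_simple :: "'a set \<Rightarrow> 'a set set \<Rightarrow> ('c set \<times> 'c set set) set \<Rightarrow> nat" where
  "ex_simple V E H = Sup {card E' | E'. E' \<subseteq> E \<and> H_free H V E'}"

end

theory Submission
  imports Defs "HOL-Library.Nat_Bijection"
begin

text \<open>Let every edge of \<open>G\<close> have multiplicity \<open>t\<close> and let \<open>S\<close> be its set of distinct edges.
  Take \<open>G'\<close> to be \<open>t\<close> vertex-disjoint copies of the simple hypergraph \<open>S\<close>; it has \<open>t |S| = e(G)\<close>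
  edges. An \<open>\<H>\<close>-free subgraph of \<open>G'\<close> meets the \<open>i\<close>-th copy in an \<open>\<H>\<close>-free set \<open>F\<^sub>i \<subseteq> S\<close>, and
  \<open>F\<^sub>i\<close> taken with multiplicity \<open>t\<close> is an \<open>\<H>\<close>-free subgraph of \<open>G\<close>, so \<open>t |F\<^sub>i| \<le> ex(G,\<H>)\<close>.
  Summing over the \<open>t\<close> copies gives \<open>t \<cdot> \<Sum> |F\<^sub>i| \<le> t \<cdot> ex(G,\<H>)\<close>.\<close>

lemma ex_multi_upper:
  assumes "M' \<subseteq># M" and "H_free H V (set_mset M')"
  shows "size M' \<le> ex_multi V M H"
proof -
  have "bdd_above {size M' | M'. M' \<subseteq># M \<and> H_free H V (set_mset M')}"
    by (rule bdd_aboveI[of _ "size M"]) (auto simp: size_mset_mono)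
  then show ?thesis
    unfolding ex_multi_def using assms by (auto intro: cSup_upper)
qed

lemma ex_simple_least:
  assumes "\<And>E'. E' \<subseteq> E \<Longrightarrow> H_free H V E' \<Longrightarrow> card E' \<le> X"
  shows "ex_simple V E H \<le> X"
proof (cases "{card E' | E'. E' \<subseteq> E \<and> H_free H V E'} = {}")
  case True
  then show ?thesis
    unfolding ex_simple_def by (metis Sup_nat_empty le0)
next
  case False
  then show ?thesis
    unfolding ex_simple_def by (rule cSup_least) (use assms in auto)
qed

lemma H_free_embedding:
  assumes "H_free H V' F'" and "inj_on p V" and "p ` V \<subseteq> V'" and "\<And>e. e \<in> F \<Longrightarrow> p ` e \<in> F'"
  shows "H_free H V F"
  unfolding H_free_def
proof
  assume "\<exists>h\<in>H. contains_copy h V F"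
  then obtain h f where h: "h \<in> H" "inj_on f (fst h)" "f ` fst h \<subseteq> V" "\<forall>e\<in>snd h. f ` e \<in> F"
    unfolding contains_copy_def by blast
  have "contains_copy h V' F'"
    unfolding contains_copy_def
  proof (intro exI conjI ballI)
    show "inj_on (p \<circ> f) (fst h)"
      using h(2,3) assms(2) by (simp add: comp_inj_on inj_on_subset)
    show "(p \<circ> f) ` fst h \<subseteq> V'"
      using h(3) assms(3) by (auto simp: image_comp[symmetric])
    show "(p \<circ> f) ` e \<in> F'" if "e \<in> snd h" for e
      using h(4) that assms(4) by (metis image_comp)
  qed
  then show False
    using assms(1) h(1) unfolding H_free_def by blast
qed

lemma constant_count_obtain:
  assumes "\<forall>e\<in>#M. \<forall>e'\<in>#M. count M e = count M e'"
  obtains t where "t > 0" and "\<And>e. e \<in># M \<Longrightarrow> count M e = t"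
proof (cases "M = {#}")
  case True
  then show ?thesis by (intro that[of 1]) auto
next
  case False
  then obtain e0 where e0: "e0 \<in># M" by (meson multiset_nonemptyE)
  show ?thesis
  proof (rule that[of "count M e0"])
    show "count M e0 > 0" using e0 by simp
    show "count M e = count M e0" if "e \<in># M" for e
      using assms e0 that by blast
  qed
qed

lemma size_filter_mset_constant_count:
  assumes "\<And>e. e \<in># M \<Longrightarrow> count M e = t"
  shows "size (filter_mset P M) = t * card {e \<in> set_mset M. P e}"
proof -
  have "size (filter_mset P M) = (\<Sum>e\<in>set_mset (filter_mset P M). count (filter_mset P M) e)"
    by (rule size_multiset_overloaded_eq)
  also have "\<dots> = (\<Sum>e\<in>{e \<in> set_mset M. P e}. t)"
    by (rule sum.cong) (auto simp: assms)
  finally show ?thesis by simp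
qed

text \<open>Vertex \<open>v\<close> of the \<open>i\<close>-th copy is encoded as the pair \<open>(g v, i)\<close>, for an injection
  \<open>g\<close> of the vertex set into \<open>nat\<close>.\<close>

definition copy_vertex :: "('a \<Rightarrow> nat) \<Rightarrow> nat \<Rightarrow> 'a \<Rightarrow> nat" where
  "copy_vertex g i v = prod_encode (g v, i)"

definition copy_vertices :: "('a \<Rightarrow> nat) \<Rightarrow> nat \<Rightarrow> 'a set \<Rightarrow> nat set" where
  "copy_vertices g t V = (\<lambda>(i, v). copy_vertex g i v) ` ({..<t} \<times> V)"

definition copy_edges :: "('a \<Rightarrow> nat) \<Rightarrow> nat \<Rightarrow> 'a set set \<Rightarrow> nat set set" where
  "copy_edges g t S = {copy_vertex g i ` e | i e. i < t \<and> e \<in> S}"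

definition copy_layer :: "('a \<Rightarrow> nat) \<Rightarrow> nat \<Rightarrow> 'a set set \<Rightarrow> nat set set \<Rightarrow> 'a set set" where
  "copy_layer g i S E = {e \<in> S. copy_vertex g i ` e \<in> E}"

lemma inj_on_copy_vertex: "inj_on g V \<Longrightarrow> inj_on (copy_vertex g i) V"
  by (auto simp: inj_on_def copy_vertex_def prod_encode_eq)

lemma copy_vertex_eq_imp_index_eq: "copy_vertex g i v = copy_vertex g j w \<Longrightarrow> i = j"
  by (simp add: copy_vertex_def prod_encode_eq)

lemma copy_vertex_image_subset: "i < t \<Longrightarrow> copy_vertex g i ` V \<subseteq> copy_vertices g t V"
  by (force simp: copy_vertices_def)

lemma inj_on_copy_edge:
  assumes "inj_on g V" and "\<And>e. e \<in> S \<Longrightarrow> e \<subseteq> V \<and> e \<noteq> {}"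
  shows "inj_on (\<lambda>(i, e). copy_vertex g i ` e) (UNIV \<times> S)"
proof (rule inj_onI, clarsimp)
  fix i j e e' assume e: "e \<in> S" and e': "e' \<in> S"
    and eq: "copy_vertex g i ` e = copy_vertex g j ` e'"
  obtain v where "v \<in> e" using assms(2)[OF e] by blast
  then have "copy_vertex g i v \<in> copy_vertex g j ` e'" using eq by blast
  then have ij: "i = j" by (auto dest: copy_vertex_eq_imp_index_eq)
  have "e \<subseteq> V" "e' \<subseteq> V" using assms(2) e e' by auto
  then have "e = e'"
    using eq ij inj_on_copy_vertex[OF assms(1), of j] by (simp add: inj_on_image_eq_iff)
  with ij show "i = j \<and> e = e'" by simp
qed

lemma card_subset_copy_edges:
  assumes "inj_on g V" and "\<And>e. e \<in> S \<Longrightarrow> e \<subseteq> V \<and> e \<noteq> {}" and "finite S"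
    and "E \<subseteq> copy_edges g t S"
  shows "card E = (\<Sum>i<t. card (copy_layer g i S E))"
proof -
  have "E = (\<lambda>(i, e). copy_vertex g i ` e) ` Sigma {..<t} (\<lambda>i. copy_layer g i S E)"
    using assms(4) by (auto simp: copy_edges_def copy_layer_def)
  moreover have "inj_on (\<lambda>(i, e). copy_vertex g i ` e) (Sigma {..<t} (\<lambda>i. copy_layer g i S E))"
    by (rule inj_on_subset[OF inj_on_copy_edge[OF assms(1,2)]]) (auto simp: copy_layer_def)
  ultimately have "card E = card (Sigma {..<t} (\<lambda>i. copy_layer g i S E))"
    by (metis card_image)
  also have "\<dots> = (\<Sum>i<t. card (copy_layer g i S E))"
    using assms(3) by (simp add: copy_layer_def)
  finally show ?thesis .
qed

lemma card_copy_edges: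
  assumes "inj_on g V" and "\<And>e. e \<in> S \<Longrightarrow> e \<subseteq> V \<and> e \<noteq> {}" and "finite S"
  shows "card (copy_edges g t S) = t * card S"
proof -
  have "card (copy_edges g t S) = (\<Sum>i<t. card (copy_layer g i S (copy_edges g t S)))"
    by (rule card_subset_copy_edges[OF assms subset_refl])
  also have "\<dots> = (\<Sum>i<t. card S)"
  proof (rule sum.cong)
    show "card (copy_layer g i S (copy_edges g t S)) = card S" if "i \<in> {..<t}" for i
      using that by (intro arg_cong[where f = card]) (auto simp: copy_layer_def copy_edges_def)
  qed simp
  finally show ?thesis by simp
qed

lemma uniform_hg_copies:
  assumes "uniform_hg r V S" and "inj_on g V"
  shows "uniform_hg r (copy_vertices g t V) (copy_edges g t S)"
  unfolding uniform_hg_def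
proof (intro conjI ballI)
  show "finite (copy_vertices g t V)"
    using assms(1) unfolding uniform_hg_def copy_vertices_def by simp
  fix e' assume "e' \<in> copy_edges g t S"
  then obtain i e where i: "i < t" and e: "e \<in> S" and e': "e' = copy_vertex g i ` e"
    unfolding copy_edges_def by blast
  have "e \<subseteq> V" and "card e = r"
    using assms(1) e unfolding uniform_hg_def by auto
  then show "e' \<subseteq> copy_vertices g t V"
    using copy_vertex_image_subset[OF i, of g V] e' by blast
  show "card e' = r"
    using \<open>e \<subseteq> V\<close> \<open>card e = r\<close> inj_on_subset[OF inj_on_copy_vertex[OF assms(2)]] e'
    by (simp add: card_image)
qed

lemma H_free_copy_layer:
  assumes "H_free H (copy_vertices g t V) E" and "inj_on g V" and "i < t"
    and "\<And>e. e \<in> S \<Longrightarrow> e \<subseteq> V"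
  shows "H_free H V (copy_layer g i S E)"
  using assms(1) inj_on_copy_vertex[OF assms(2)] copy_vertex_image_subset[OF assms(3)]
  by (rule H_free_embedding) (auto simp: copy_layer_def)

lemma ex_simple_copy_edges_le:
  assumes "uniform_mhg r V M" and "r \<ge> 1" and "inj_on g V" and "t > 0"
    and count: "\<And>e. e \<in># M \<Longrightarrow> count M e = t"
  shows "ex_simple (copy_vertices g t V) (copy_edges g t (set_mset M)) H \<le> ex_multi V M H"
proof (rule ex_simple_least)
  let ?S = "set_mset M" and ?X = "ex_multi V M H"
  have edges: "e \<subseteq> V \<and> e \<noteq> {}" if "e \<in> ?S" for e
    using assms(1,2) that by (auto simp: uniform_mhg_def)
  fix E assume E: "E \<subseteq> copy_edges g t ?S" and free: "H_free H (copy_vertices g t V) E"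
  have layer: "t * card (copy_layer g i ?S E) \<le> ?X" if "i < t" for i
  proof -
    let ?M' = "filter_mset (\<lambda>e. e \<in> copy_layer g i ?S E) M"
    have "set_mset ?M' = copy_layer g i ?S E"
      by (auto simp: copy_layer_def)
    then have "H_free H V (set_mset ?M')"
      using H_free_copy_layer[OF free assms(3) that] edges by auto
    then have "size ?M' \<le> ?X"
      by (intro ex_multi_upper) auto
    moreover have "{e \<in> ?S. e \<in> copy_layer g i ?S E} = copy_layer g i ?S E"
      by (auto simp: copy_layer_def)
    ultimately show ?thesis
      using size_filter_mset_constant_count[OF count, of "\<lambda>e. e \<in> copy_layer g i ?S E"]
      by simp
  qed
  have "t * card E = (\<Sum>i<t. t * card (copy_layer g i ?S E))"
    using card_subset_copy_edges[OF assms(3) edges _ E] by (simp add: sum_distrib_left)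
  also have "\<dots> \<le> t * ?X"
    using sum_mono[of "{..<t}", OF layer] by simp
  finally show "card E \<le> ?X"
    using assms(4) by simp
qed

theorem proposition2p9:
  fixes r :: nat
    and H :: "('c set \<times> 'c set set) set"
    and V :: "'a set" and M :: "'a set multiset"
  assumes "r \<ge> 1"
    and "\<forall>h\<in>H. uniform_hg r (fst h) (snd h)"
    and "uniform_mhg r V M"
    and "\<forall>e\<in>#M. \<forall>e'\<in>#M. count M e = count M e'"
  shows "\<exists>(V' :: nat set) E'. uniform_hg r V' E' \<and> card E' = size M
           \<and> ex_simple V' E' H \<le> ex_multi V M H"
proof -
  obtain t where "t > 0" and count: "\<And>e. e \<in># M \<Longrightarrow> count M e = t"
    using constant_count_obtain[OF assms(4)] by blast
  have "finite V" and S: "uniform_hg r V (set_mset M)"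
    using assms(3) by (simp_all add: uniform_mhg_def uniform_hg_def)
  then obtain g :: "'a \<Rightarrow> nat" where g: "inj_on g V"
    by (metis finite_imp_inj_to_nat_seg)
  have edges: "e \<subseteq> V \<and> e \<noteq> {}" if "e \<in># M" for e
    using assms(1,3) that by (auto simp: uniform_mhg_def)
  have "size M = t * card (set_mset M)"
    using size_filter_mset_constant_count[OF count, of "\<lambda>_. True"] by simp
  then have "card (copy_edges g t (set_mset M)) = size M"
    using card_copy_edges[OF g edges] by simp
  then show ?thesis
    using uniform_hg_copies[OF S g] ex_simple_copy_edges_le[OF assms(3,1) g \<open>t > 0\<close> count]
    by blast
qed

end
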